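(* Let $\mathbb{Z}_4$ be the semiring of integers modulo $4$. Let $A=\{a_0,a_1,a_2,a_3,b_0,b_1,b_2,b_3,c_0,c_1\}$ (ten distinct elements). Let $\mathbb{X}\colon\mathrm{As}(\{x,y,z\},A)\to\mathbb{Z}_4$ map each of the eight assignments $(x,y,z)\mapsto(a_0,b_0,c_0),(a_0,b_1,c_0),(a_1,b_0,c_1),(a_1,b_1,c_1),(a_2,b_2,c_0),(a_2,b_3,c_0),(a_3,b_2,c_1),(a_3,b_3,c_1)$ to $1$, and every other assignment to $0$. Then $\mathbb{X}$ satisfies the pure independence atoms $x\perp y$ and $xy\perp z$, but does not satisfy $x\perp yz$. Consequently the mixing rule (from $x\perp y$ and $xy\perp z$ infer $x\perp yz$) is not sound for $\mathbb{Z}_4$-teams.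
   Context: For a commutative semiring $K$, a $K$-team is a function $\mathbb{X}\colon\mathrm{As}(V,A)\to K$, where $\mathrm{As}(V,A)$ is the set of assignments $V\to A$. With $V=\{x_1<\dots<x_k\}$ and $\vec a_s=(s(x_1),\dots,s(x_k))$, let $\pi_{\mathbb{X}}$ map the fact $R(\vec a_s)$ ($R$ of arity $k$) to $\mathbb{X}(s)$. For variable tuples $\vec x,\vec y$ from $V$ with index tuples $\vec j,\vec k$, the pure independence atom $\vec x\perp\vec y$ has value $[\![\phi^{(),\vec j,\vec k}_{\rm indep}]\!]_{\pi_{\mathbb{X}}}$, where $$\phi^{(),\vec j,\vec k}_{\rm indep}=\forall\vec v\vec w\big((\theta_{\vec j}(\vec v)\wedge\theta_{\vec k}(\vec w))=(\theta_{()}\wedge\theta_{\vec j,\vec k}(\vec v,\vec w))\big)$$ and $\theta_{\vec i_1,\dots,\vec i_n}(\vec u_1,\dots,\vec u_n)=\exists\vec x'(R(\vec x')\wedge\vec x'_{\vec i_1}=\vec u_1\wedge\dots\wedge\vec x'_{\vec i_n}=\vec u_n)$. Conjunction is interpreted as product, $\exists$ as sum over $A$, $\forall$ as product over $A$, equality literals as $1/0$, and a formula equality as $1$ if both sides have equal value in $K$, and $0$ otherwise. Unfolded, $\mathbb{X}$ satisfies $\vec x\perp\vec y$ (value $\neq0$) iff for all tuples $\vec a,\vec b$ over $A$: $$\Big(\sum_{s:\,s(\vec x)=\vec a}\mathbb{X}(s)\Big)\cdot\Big(\sum_{s:\,s(\vec y)=\vec b}\mathbb{X}(s)\Big)=\Big(\sum_s\mathbb{X}(s)\Big)\cdot\Big(\sum_{s:\,s(\vec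 x)=\vec a,\,s(\vec y)=\vec b}\mathbb{X}(s)\Big)$$ in $K$. Here $xy\perp z$ has $\vec x=(x,y)$, $\vec y=(z)$, and $x\perp yz$ has $\vec x=(x)$, $\vec y=(y,z)$. *)

theory Defs
  imports Main "HOL-Library.FuncSet" "HOL-Library.Numeral_Type"
begin

definition As :: "'v set \<Rightarrow> 'a set \<Rightarrow> ('v \<Rightarrow> 'a) set" where
  "As V A = PiE V (\<lambda>_. A)"

definition pure_indep ::
  "'v set \<Rightarrow> 'a set \<Rightarrow> (('v \<Rightarrow> 'a) \<Rightarrow> 'k::comm_semiring_1) \<Rightarrow> 'v list \<Rightarrow> 'v list \<Rightarrow> bool" where
  "pure_indep V A X xs ys \<longleftrightarrow>
     (\<forall>as bs. set as \<subseteq> A \<longrightarrow> length as = length xs \<longrightarrow>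
              set bs \<subseteq> A \<longrightarrow> length bs = length ys \<longrightarrow>
        (\<Sum>s\<in>As V A. if map s xs = as then X s else 0) *
        (\<Sum>s\<in>As V A. if map s ys = bs then X s else 0) =
        (\<Sum>s\<in>As V A. X s) *
        (\<Sum>s\<in>As V A. if map s xs = as \<and> map s ys = bs then X s else 0))"

datatype var = x | y | z

datatype elem = a0 | a1 | a2 | a3 | b0 | b1 | b2 | b3 | c0 | c1

definition Xteam :: "(var \<Rightarrow> elem) \<Rightarrow> 4" where
  "Xteam s = (if (s x, s y, s z) \<in>
      {(a0,b0,c0),(a0,b1,c0),(a1,b0,c1),(a1,b1,c1),
       (a2,b2,c0),(a2,b3,c0),(a3,b2,c1),(a3,b3,c1)} then 1 else 0)"

end

theory Submission
  imports Defs
begin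

text \<open>The team has total weight 8 = 0 in \<open>\<int>\<^sub>4\<close>, so the right-hand side of every
  independence equation vanishes and an atom holds iff all products of marginals vanish.
  Each value of x and of y has marginal weight 2 and each value of z has weight 4 = 0,
  so these products are 4 = 0 or contain a factor 0. For x \<perp> yz, however, the marginal
  of x = a0 is 2 and that of (y, z) = (b2, c0) is 1, giving 2 \<noteq> 0.\<close>

definition marginal ::
  "'v set \<Rightarrow> 'a set \<Rightarrow> (('v \<Rightarrow> 'a) \<Rightarrow> 'k::comm_semiring_1) \<Rightarrow> 'v list \<Rightarrow> 'a list \<Rightarrow> 'k" where
  "marginal V A X vs as = (\<Sum>s\<in>As V A. if map s vs = as then X s else 0)"

lemma pure_indep_iff_marginals_if_total_zero:
  assumes "(\<Sum>s\<in>As V A. X s) = 0"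
  shows "pure_indep V A X xs ys \<longleftrightarrow>
    (\<forall>as bs. set as \<subseteq> A \<longrightarrow> length as = length xs \<longrightarrow>
             set bs \<subseteq> A \<longrightarrow> length bs = length ys \<longrightarrow>
       marginal V A X xs as * marginal V A X ys bs = 0)"
  unfolding pure_indep_def marginal_def assms by simp

lemma As_UNIV: "As UNIV UNIV = UNIV"
  unfolding As_def by (simp add: PiE_UNIV_domain)

lemma length_Suc_0_conv_singleton: "length as = Suc 0 \<longleftrightarrow> (\<exists>a. as = [a])"
  by (cases as) auto

definition assignment :: "elem \<times> elem \<times> elem \<Rightarrow> var \<Rightarrow> elem" where
  "assignment t = (\<lambda>v. case v of x \<Rightarrow> fst t | y \<Rightarrow> fst (snd t) | z \<Rightarrow> snd (snd t))"

definition Xteam_support :: "(elem \<times> elem \<times> elem) set" where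
  "Xteam_support = {(a0,b0,c0),(a0,b1,c0),(a1,b0,c1),(a1,b1,c1),
       (a2,b2,c0),(a2,b3,c0),(a3,b2,c1),(a3,b3,c1)}"

lemma UNIV_elem: "(UNIV :: elem set) = {a0,a1,a2,a3,b0,b1,b2,b3,c0,c1}"
  using elem.exhaust by auto

instance elem :: finite
  by standard (simp add: UNIV_elem)

lemma bij_assignment: "bij assignment"
proof (rule bijI)
  show "inj assignment"
  proof
    fix s t assume "assignment s = assignment t"
    then have "assignment s v = assignment t v" for v by simp
    from this[of x] this[of y] this[of z] show "s = t"
      by (auto simp: assignment_def prod_eq_iff)
  qed
  show "surj assignment"
  proof (rule surjI)
    fix f :: "var \<Rightarrow> elem"
    show "assignment (f x, f y, f z) = f"
      by (rule ext) (simp add: assignment_def split: var.split)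
  qed
qed

lemma sum_Xteam_if:
  "(\<Sum>s\<in>UNIV. if P s then Xteam s else 0) = (\<Sum>t\<in>Xteam_support. if P (assignment t) then 1 else 0)"
proof -
  have "(\<Sum>s\<in>UNIV. if P s then Xteam s else 0)
      = (\<Sum>t\<in>UNIV. if P (assignment t) then Xteam (assignment t) else 0)"
    by (rule sum.reindex_bij_betw[symmetric]) (simp add: bij_assignment)
  also have "\<dots> = (\<Sum>t\<in>UNIV. if t \<in> Xteam_support then (if P (assignment t) then 1 else 0) else 0)"
    by (rule sum.cong) (auto simp: Xteam_def assignment_def Xteam_support_def)
  also have "\<dots> = (\<Sum>t\<in>Xteam_support. if P (assignment t) then 1 else 0)"
    by (simp add: sum.inter_restrict[symmetric])
  finally show ?thesis .
qed

lemma total_weight_Xteam: "(\<Sum>s\<in>As UNIV UNIV. Xteam s) = 0"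
  using sum_Xteam_if[of "\<lambda>_. True"] by (simp add: As_UNIV Xteam_support_def)

lemma marginal_Xteam_if:
  "marginal UNIV UNIV Xteam vs as
     = (\<Sum>t\<in>Xteam_support. if map (assignment t) vs = as then 1 else 0)"
  unfolding marginal_def As_UNIV by (rule sum_Xteam_if)

lemma marginal_Xteam_x: "marginal UNIV UNIV Xteam [x] [a] \<in> {0, 2}"
  unfolding marginal_Xteam_if by (cases a) (simp_all add: Xteam_support_def assignment_def)

lemma marginal_Xteam_y: "marginal UNIV UNIV Xteam [y] [b] \<in> {0, 2}"
  unfolding marginal_Xteam_if by (cases b) (simp_all add: Xteam_support_def assignment_def)

lemma marginal_Xteam_z: "marginal UNIV UNIV Xteam [z] [c] = 0"
  unfolding marginal_Xteam_if by (cases c) (simp_all add: Xteam_support_def assignment_def)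

lemma Xteam_indep_x_y: "pure_indep UNIV UNIV Xteam [x] [y]"
proof -
  have "marginal UNIV UNIV Xteam [x] [a] * marginal UNIV UNIV Xteam [y] [b] = 0" for a b
    using marginal_Xteam_x[of a] marginal_Xteam_y[of b] by auto
  then show ?thesis
    by (auto simp: pure_indep_iff_marginals_if_total_zero[OF total_weight_Xteam]
        length_Suc_0_conv_singleton)
qed

lemma Xteam_indep_xy_z: "pure_indep UNIV UNIV Xteam [x, y] [z]"
  by (auto simp: pure_indep_iff_marginals_if_total_zero[OF total_weight_Xteam]
      length_Suc_0_conv_singleton marginal_Xteam_z)

lemma Xteam_not_indep_x_yz: "\<not> pure_indep UNIV UNIV Xteam [x] [y, z]"
proof
  assume "pure_indep UNIV UNIV Xteam [x] [y, z]"
  then have "marginal UNIV UNIV Xteam [x] [a0] * marginal UNIV UNIV Xteam [y, z] [b2, c0] = 0"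
    unfolding pure_indep_iff_marginals_if_total_zero[OF total_weight_Xteam] by simp
  then show False
    unfolding marginal_Xteam_if by (simp add: Xteam_support_def assignment_def)
qed

theorem mainTheorem7:
  shows "pure_indep (UNIV :: var set) (UNIV :: elem set) Xteam [x] [y]
       \<and> pure_indep (UNIV :: var set) (UNIV :: elem set) Xteam [x, y] [z]
       \<and> \<not> pure_indep (UNIV :: var set) (UNIV :: elem set) Xteam [x] [y, z]
       \<and> \<not> (\<forall>(T :: (var \<Rightarrow> elem) \<Rightarrow> 4) u v w.
               pure_indep (UNIV :: var set) (UNIV :: elem set) T [u] [v]
             \<and> pure_indep (UNIV :: var set) (UNIV :: elem set) T [u, v] [w]
             \<longrightarrow> pure_indep (UNIV :: var set) (UNIV :: elem set) T [u] [v, w])"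
  using Xteam_indep_x_y Xteam_indep_xy_z Xteam_not_indep_x_yz by blast

end
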